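(* Let $f:\mathbb{R}^n\to\mathbb{R}^n$ be locally Lipschitz, partitioned into blocks $x=(x_1,\dots,x_N)$, $x_j\in\mathbb{R}^{n_j}$, with $X=\prod_j X_j$ and $X_T=\prod_jX_{j,T}$ compact, and assume the sparsity graph is acyclic with leafs $x_{i_1},\dots,x_{i_l}$. Let $I_r$ index the blocks of $\mathbf{P}(x_{i_r})$, $X_{I_r}=\prod_{j\in I_r}X_j\subset\mathbb{R}^{n_r}$, and for $T\ge0$ let $R_T$ be the ROA of $\dot x=f(x)$. Suppose $v^r\in C^1([0,T]\times\mathbb{R}^{n_r})$, $w^r\in C(X_{I_r})$, $r=1,\dots,l$, satisfy $$\sum_{r=1}^l\mathcal{L}_rv^r(t,x_{I_r})\le0 \text{ on }[0,T]\times X,\quad \sum_{r=1}^lv^r(T,x_{I_r})\ge0\text{ on }X_T,$$ $$\sum_{r=1}^lw^r(x_{I_r})\ge0\text{ on }X,\quad \sum_{r=1}^l\big(w^r(x_{I_r})-v^r(0,x_{I_r})\big)\ge l\text{ on }X.$$ Then $\{x\in X:\sum_{r=1}^lw^r(x_{I_r})\ge l\}\supset R_T$.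
   Context: Sparsity graph: nodes are the blocks; $(x_i,x_j)$ is an edge if $f_j$ depends on $x_i$; the past $\mathbf{P}(x_j)$ is $x_j$ together with all nodes with a directed path to $x_j$; a leaf is a node without successor. $x_{I_r}$ is the subvector of $x$ of blocks in $I_r$, $f_{I_r}$ the corresponding components of $f$ (depending only on $x_{I_r}$), and $\mathcal{L}_rv=\partial_tv+\nabla_{x_{I_r}}v\cdot f_{I_r}$. ROA: $R_T=\{x_0\in X:$ the solution of $\dot x=f(x)$, $x(0)=x_0$ satisfies $x(t)\in X$ on $[0,T]$ and $x(T)\in X_T\}$. *)

theory Defs
  imports "HOL-Analysis.Analysis"
begin

text \<open>State space: real^'n, coordinates partitioned into blocks via blk :: 'n => 'b.\<close>

definition locally_lipschitz :: "(real^'n \<Rightarrow> real^'n) \<Rightarrow> bool" where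
  "locally_lipschitz f \<longleftrightarrow> (\<forall>x. \<exists>e>0. \<exists>L. L-lipschitz_on (ball x e) f)"

text \<open>Masking: keep the coordinates belonging to blocks in S, zero the others.
  This is the embedding of the subvector x_S into real^'n.\<close>
definition mask :: "('n \<Rightarrow> 'b) \<Rightarrow> 'b set \<Rightarrow> real^'n \<Rightarrow> real^'n" where
  "mask blk S x = (\<chi> k. if blk k \<in> S then x $ k else 0)"

text \<open>Edge (i,j) of the sparsity graph: i \<noteq> j and f_j depends on x_i.\<close>
definition sp_edge :: "('n \<Rightarrow> 'b) \<Rightarrow> (real^'n \<Rightarrow> real^'n) \<Rightarrow> 'b \<Rightarrow> 'b \<Rightarrow> bool" where
  "sp_edge blk f i j \<longleftrightarrow> i \<noteq> j \<and>
     (\<exists>x y. (\<forall>k. blk k \<noteq> i \<longrightarrow> x $ k = y $ k) \<and> (\<exists>k. blk k = j \<and> f x $ k \<noteq> f y $ k))"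

definition sp_edges :: "('n \<Rightarrow> 'b) \<Rightarrow> (real^'n \<Rightarrow> real^'n) \<Rightarrow> ('b \<times> 'b) set" where
  "sp_edges blk f = {(i, j). sp_edge blk f i j}"

definition sp_acyclic :: "('n \<Rightarrow> 'b) \<Rightarrow> (real^'n \<Rightarrow> real^'n) \<Rightarrow> bool" where
  "sp_acyclic blk f \<longleftrightarrow> acyclic (sp_edges blk f)"

definition past :: "('n \<Rightarrow> 'b) \<Rightarrow> (real^'n \<Rightarrow> real^'n) \<Rightarrow> 'b \<Rightarrow> 'b set" where
  "past blk f j = {i. (i, j) \<in> (sp_edges blk f)\<^sup>*}"

definition leaves :: "('n \<Rightarrow> 'b) \<Rightarrow> (real^'n \<Rightarrow> real^'n) \<Rightarrow> 'b set" where
  "leaves blk f = {i. \<not> (\<exists>j. sp_edge blk f i j)}"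

definition prodset :: "('n \<Rightarrow> 'b) \<Rightarrow> ('b \<Rightarrow> (real^'n) set) \<Rightarrow> (real^'n) set" where
  "prodset blk XB = {x. \<forall>j. mask blk {j} x \<in> XB j}"

definition ROA :: "(real^'n \<Rightarrow> real^'n) \<Rightarrow> (real^'n) set \<Rightarrow> (real^'n) set \<Rightarrow> real \<Rightarrow> (real^'n) set" where
  "ROA f X XT T = {x0 \<in> X. \<exists>\<gamma>. \<gamma> 0 = x0 \<and>
      (\<forall>t\<in>{0..T}. (\<gamma> has_vector_derivative f (\<gamma> t)) (at t within {0..T})) \<and>
      (\<forall>t\<in>{0..T}. \<gamma> t \<in> X) \<and> \<gamma> T \<in> XT}"

end

theory Submission
  imports Defs
begin

text \<open>Along a trajectory \<gamma> starting in R_T, V(t) = \<Sum>_r v^r(t, x_{I_r}(\<gamma> t)) has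
  derivative \<Sum>_r \<L>_r v^r \<le> 0, so V(0) \<ge> V(T) \<ge> 0, and the hypothesis on w - v(0,.) gives
  \<Sum>_r w^r \<ge> l + V(0) \<ge> l at \<gamma> 0.\<close>

lemma bounded_linear_mask: "bounded_linear (mask blk S)"
proof -
  have "linear (mask blk S)"
    by (rule linearI) (auto simp: mask_def vec_eq_iff)
  then show ?thesis
    by (simp add: linear_conv_bounded_linear)
qed

lemma has_real_derivative_along_curve:
  fixes v :: "real \<times> 'a::real_normed_vector \<Rightarrow> real"
    and \<gamma> :: "real \<Rightarrow> 'b::real_normed_vector"
  assumes P: "bounded_linear P"
    and v: "(v has_derivative D) (at (t, P (\<gamma> t)) within S \<times> UNIV)"
    and \<gamma>: "(\<gamma> has_vector_derivative \<gamma>') (at t within S)"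
  shows "((\<lambda>s. v (s, P (\<gamma> s))) has_real_derivative D (1, P \<gamma>')) (at t within S)"
proof -
  have "(\<gamma> has_derivative (\<lambda>h. h *\<^sub>R \<gamma>')) (at t within S)"
    using \<gamma> by (simp add: has_vector_derivative_def)
  from bounded_linear.has_derivative[OF P this]
  have "((\<lambda>s. P (\<gamma> s)) has_derivative (\<lambda>h. h *\<^sub>R P \<gamma>')) (at t within S)"
    by (simp add: linear_cmul[OF bounded_linear.linear[OF P]])
  from has_derivative_Pair[OF has_derivative_ident this]
  have curve: "((\<lambda>s. (s, P (\<gamma> s))) has_derivative (\<lambda>h. h *\<^sub>R (1, P \<gamma>'))) (at t within S)"
    by simp
  have "(v has_derivative D) (at (t, P (\<gamma> t)) within (\<lambda>s. (s, P (\<gamma> s))) ` S)"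
    using v by (rule has_derivative_subset) auto
  from diff_chain_within[OF curve this]
  have "((\<lambda>s. v (s, P (\<gamma> s))) has_derivative (\<lambda>h. D (h *\<^sub>R (1, P \<gamma>')))) (at t within S)"
    by (simp add: comp_def)
  moreover have "D (h *\<^sub>R (1, P \<gamma>')) = h * D (1, P \<gamma>')" for h
    using linear_cmul[OF has_derivative_linear[OF v], of h "(1, P \<gamma>')"]
    by simp
  ultimately show ?thesis
    by (simp add: has_field_derivative_def mult_commute_abs)
qed

lemma nonpos_derivative_imp_decreasing_Icc:
  fixes V :: "real \<Rightarrow> real"
  assumes "a \<le> b"
    and deriv: "\<And>t. t \<in> {a..b} \<Longrightarrow> (V has_real_derivative V' t) (at t within {a..b})"
    and nonpos: "\<And>t. t \<in> {a..b} \<Longrightarrow> V' t \<le> 0"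
  shows "V b \<le> V a"
proof (rule DERIV_nonpos_imp_decreasing_open[OF \<open>a \<le> b\<close>])
  fix t assume "a < t" "t < b"
  then have "(V has_real_derivative V' t) (at t)"
    using deriv[of t] at_within_Icc_at[of a t b] by auto
  with nonpos \<open>a < t\<close> \<open>t < b\<close> show "\<exists>y. (V has_real_derivative y) (at t) \<and> y \<le> 0"
    by auto
next
  show "continuous_on {a..b} V"
    using deriv by (meson DERIV_continuous continuous_on_eq_continuous_within)
qed

theorem proposition3:
  fixes f :: "real^'n \<Rightarrow> real^'n"
    and blk :: "'n \<Rightarrow> 'b::finite"
    and XB XTB :: "'b \<Rightarrow> (real^'n) set"
    and T :: real
    and v :: "'b \<Rightarrow> real \<times> (real^'n) \<Rightarrow> real"
    and D :: "'b \<Rightarrow> real \<times> (real^'n) \<Rightarrow> real \<times> (real^'n) \<Rightarrow> real"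
    and w :: "'b \<Rightarrow> real^'n \<Rightarrow> real"
  assumes lip: "locally_lipschitz f"
    and blocks: "surj blk"
    and XB_block: "\<And>j. XB j \<subseteq> range (mask blk {j})"
    and XTB_block: "\<And>j. XTB j \<subseteq> range (mask blk {j})"
    and XB_compact: "\<And>j. compact (XB j)"
    and XTB_compact: "\<And>j. compact (XTB j)"
    and acyc: "sp_acyclic blk f"
    and T_nonneg: "T \<ge> 0"
    and v_deriv: "\<And>r z. r \<in> leaves blk f \<Longrightarrow> z \<in> {0..T} \<times> UNIV \<Longrightarrow>
         (v r has_derivative D r z) (at z within {0..T} \<times> UNIV)"
    and D_cont: "\<And>r h. r \<in> leaves blk f \<Longrightarrow>
         continuous_on ({0..T} \<times> UNIV) (\<lambda>z. D r z h)"
    and w_cont: "\<And>r. r \<in> leaves blk f \<Longrightarrow>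
         continuous_on (mask blk (past blk f r) ` prodset blk XB) (w r)"
    and Lv: "\<And>t x. t \<in> {0..T} \<Longrightarrow> x \<in> prodset blk XB \<Longrightarrow>
         (\<Sum>r\<in>leaves blk f. D r (t, mask blk (past blk f r) x)
                                  (1, mask blk (past blk f r) (f x))) \<le> 0"
    and vT: "\<And>x. x \<in> prodset blk XTB \<Longrightarrow>
         (\<Sum>r\<in>leaves blk f. v r (T, mask blk (past blk f r) x)) \<ge> 0"
    and w_nonneg: "\<And>x. x \<in> prodset blk XB \<Longrightarrow>
         (\<Sum>r\<in>leaves blk f. w r (mask blk (past blk f r) x)) \<ge> 0"
    and wv: "\<And>x. x \<in> prodset blk XB \<Longrightarrow>
         (\<Sum>r\<in>leaves blk f. w r (mask blk (past blk f r) x) - v r (0, mask blk (past blk f r) x))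
           \<ge> real (card (leaves blk f))"
  shows "ROA f (prodset blk XB) (prodset blk XTB) T \<subseteq>
         {x \<in> prodset blk XB. (\<Sum>r\<in>leaves blk f. w r (mask blk (past blk f r) x)) \<ge> real (card (leaves blk f))}"
proof
  let ?L = "leaves blk f"
  let ?m = "\<lambda>r. mask blk (past blk f r)"
  fix x0 assume "x0 \<in> ROA f (prodset blk XB) (prodset blk XTB) T"
  then obtain \<gamma> where \<gamma>0: "\<gamma> 0 = x0" and x0X: "x0 \<in> prodset blk XB"
    and \<gamma>_deriv: "\<And>t. t \<in> {0..T} \<Longrightarrow> (\<gamma> has_vector_derivative f (\<gamma> t)) (at t within {0..T})"
    and \<gamma>X: "\<And>t. t \<in> {0..T} \<Longrightarrow> \<gamma> t \<in> prodset blk XB"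
    and \<gamma>T: "\<gamma> T \<in> prodset blk XTB"
    unfolding ROA_def by blast
  define V where "V t = (\<Sum>r\<in>?L. v r (t, ?m r (\<gamma> t)))" for t
  have "V T \<le> V 0"
  proof (rule nonpos_derivative_imp_decreasing_Icc[OF T_nonneg])
    fix t assume t: "t \<in> {0..T}"
    show "(V has_real_derivative (\<Sum>r\<in>?L. D r (t, ?m r (\<gamma> t)) (1, ?m r (f (\<gamma> t)))))
        (at t within {0..T})"
      unfolding V_def using t
      by (intro DERIV_sum has_real_derivative_along_curve[OF bounded_linear_mask]
          v_deriv \<gamma>_deriv) auto
    show "(\<Sum>r\<in>?L. D r (t, ?m r (\<gamma> t)) (1, ?m r (f (\<gamma> t)))) \<le> 0"
      using Lv[OF t \<gamma>X[OF t]] .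
  qed
  moreover have "V T \<ge> 0"
    using vT[OF \<gamma>T] by (simp add: V_def)
  moreover have "(\<Sum>r\<in>?L. w r (?m r x0) - v r (0, ?m r x0)) \<ge> real (card ?L)"
    using wv[OF x0X] .
  ultimately have "(\<Sum>r\<in>?L. w r (?m r x0)) \<ge> real (card ?L)"
    by (simp add: V_def \<gamma>0 sum_subtractf)
  with x0X show "x0 \<in> {x \<in> prodset blk XB. (\<Sum>r\<in>?L. w r (?m r x)) \<ge> real (card ?L)}"
    by simp
qed

end
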